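(* Let $\{e_n\}_{n\in\mathbb{Z}}$ be i.i.d. real random variables with $\mathbb{E}|e_1|^2<\infty$, let $q,d\ge1$, $r,\mu_1,\mu_2,\phi_i,\psi_i\in\mathbb{R}$, and with $a_n=\mu_2+e_n+\sum_{i=1}^q\psi_ie_{n-i}$, $b_n=\mu_1+e_n+\sum_{i=1}^q\phi_ie_{n-i}$ assume $\mathbb{P}(a_n\le r,\ b_n\le r)+\mathbb{P}(a_n>r,\ b_n>r)\neq 0$. Let $\{y_n\}_{n\in\mathbb{Z}}$ be the unique strictly stationary solution of $$y_n=\begin{cases}\mu_1+e_n+\sum_{i=1}^q\phi_ie_{n-i}, & \text{if } y_{n-d}\le r,\\ \mu_2+e_n+\sum_{i=1}^q\psi_ie_{n-i}, & \text{if } y_{n-d}>r.\end{cases}$$ Then $\mathbb{E}y_0^2<\infty$ and there exist constants $C>0$ and $\rho\in(0,1)$ such that $|\operatorname{Cov}(y_0,y_k)|\le C\rho^k$ for all $k\ge1$; in particular, when $\operatorname{Var}(y_0)>0$, the autocorrelation function $\rho_k=\operatorname{Cov}(y_0,y_k)/\operatorname{Var}(y_0)$ satisfies $\rho_k=O(\rho^k)$ as $k\to\infty$.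
   Context: A solution means a process on the same probability space as $\{e_n\}$ satisfying the equation almost surely for every $n$; under the stated hypothesis such a strictly stationary, ergodic solution exists and is unique. *)

theory Defs
  imports "HOL-Probability.Probability" "HOL-Library.Landau_Symbols"
begin

definition strictly_stationary :: "'a measure \<Rightarrow> (int \<Rightarrow> 'a \<Rightarrow> real) \<Rightarrow> bool" where
  "strictly_stationary M y \<longleftrightarrow>
     (\<forall>J k. finite J \<longrightarrow>
        distr M (PiM J (\<lambda>_. borel)) (\<lambda>\<omega>. \<lambda>n\<in>J. y (n + k) \<omega>)
      = distr M (PiM J (\<lambda>_. borel)) (\<lambda>\<omega>. \<lambda>n\<in>J. y n \<omega>))"

definition covariance :: "'a measure \<Rightarrow> ('a \<Rightarrow> real) \<Rightarrow> ('a \<Rightarrow> real) \<Rightarrow> real" where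
  "covariance M X Y =
     integral\<^sup>L M (\<lambda>\<omega>. (X \<omega> - integral\<^sup>L M X) * (Y \<omega> - integral\<^sup>L M Y))"

end

theory Submission
  imports Defs
begin

text \<open>
  Write \<open>L = d (q + 1)\<close>. At a time \<open>n\<close> where both regime values lie on the same side of the
  threshold \<open>r\<close> ("the regimes agree"), the regime in force \<open>d\<close> steps later is determined by the
  noise alone; from then on the solution coincides with a chain started anywhere in the past.
  Hence \<open>y t\<close> is approximated by a functional of the noise on the window \<open>[t - n L - q, t]\<close>,
  and the approximation is exact unless the regimes disagree at the \<open>n\<close> checkpoints
  \<open>t - n L, t - (n - 1) L, \<dots>\<close>, an event of probability \<open>(1 - p)\<^sup>n\<close> with \<open>p > 0\<close> (the
  checkpoints use disjoint noise windows). For \<open>k > n L + q\<close> the approximations of \<open>y 0\<close> and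
  \<open>y k\<close> are independent, and Cauchy--Schwarz bounds the covariance by \<open>4 K (1 - p)\<^sup>n\<^sup>/\<^sup>2\<close>.
\<close>

definition square_integrable :: "'a measure \<Rightarrow> ('a \<Rightarrow> real) \<Rightarrow> bool" where
  "square_integrable M f \<longleftrightarrow> f \<in> borel_measurable M \<and> integrable M (\<lambda>x. (f x)\<^sup>2)"

lemma square_integrable_mult:
  assumes "square_integrable M f" "square_integrable M g"
  shows "integrable M (\<lambda>x. f x * g x)"
proof (rule Bochner_Integration.integrable_bound)
  show "integrable M (\<lambda>x. (f x)\<^sup>2 + (g x)\<^sup>2)"
    using assms by (auto simp: square_integrable_def)
  show "AE x in M. norm (f x * g x) \<le> norm ((f x)\<^sup>2 + (g x)\<^sup>2)"
  proof (intro AE_I2)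
    fix x
    have "2 * (\<bar>f x\<bar> * \<bar>g x\<bar>) \<le> (f x)\<^sup>2 + (g x)\<^sup>2"
      using sum_squares_bound[of "\<bar>f x\<bar>" "\<bar>g x\<bar>"] by (simp add: mult.assoc)
    moreover have "0 \<le> \<bar>f x\<bar> * \<bar>g x\<bar>" by simp
    ultimately have "\<bar>f x\<bar> * \<bar>g x\<bar> \<le> (f x)\<^sup>2 + (g x)\<^sup>2" by linarith
    then show "norm (f x * g x) \<le> norm ((f x)\<^sup>2 + (g x)\<^sup>2)"
      by (simp add: abs_mult)
  qed
qed (use assms in \<open>auto simp: square_integrable_def\<close>)

lemma square_integrable_integrable:
  "square_integrable M f \<Longrightarrow> finite_measure M \<Longrightarrow> integrable M f"
  unfolding square_integrable_def by (auto intro: finite_measure.square_integrable_imp_integrable)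

lemma square_integrable_const: "finite_measure M \<Longrightarrow> square_integrable M (\<lambda>_. c)"
  unfolding square_integrable_def by (auto intro: finite_measure.integrable_const)

lemma square_integrable_add:
  assumes "square_integrable M f" "square_integrable M g"
  shows "square_integrable M (\<lambda>x. f x + g x)"
proof -
  have "integrable M (\<lambda>x. (f x)\<^sup>2 + 2 * (f x * g x) + (g x)\<^sup>2)"
    using assms square_integrable_mult[OF assms] by (auto simp: square_integrable_def)
  then show ?thesis
    using assms by (simp add: square_integrable_def power2_sum algebra_simps borel_measurable_add)
qed

lemma square_integrable_cmult:
  "square_integrable M f \<Longrightarrow> square_integrable M (\<lambda>x. c * f x)"
  unfolding square_integrable_def by (auto simp: power_mult_distrib intro: borel_measurable_times)

lemma square_integrable_diff:
  "square_integrable M f \<Longrightarrow> square_integrable M g \<Longrightarrow> square_integrable M (\<lambda>x. f x - g x)"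
  using square_integrable_add[OF _ square_integrable_cmult, of M f g "-1"] by simp

lemma square_integrable_sum:
  "finite S \<Longrightarrow> (\<And>i. i \<in> S \<Longrightarrow> square_integrable M (f i)) \<Longrightarrow>
    square_integrable M (\<lambda>x. \<Sum>i\<in>S. f i x)"
proof (induction S rule: finite_induct)
  case empty
  show ?case by (simp add: square_integrable_def)
next
  case (insert a S)
  then show ?case by (simp add: square_integrable_add)
qed

lemma square_integrable_dominated:
  assumes "square_integrable M f" "g \<in> borel_measurable M" "AE x in M. \<bar>g x\<bar> \<le> \<bar>f x\<bar>"
  shows "square_integrable M g"
proof -
  have "integrable M (\<lambda>x. (g x)\<^sup>2)"
  proof (rule Bochner_Integration.integrable_bound)
    show "integrable M (\<lambda>x. (f x)\<^sup>2)"
      using assms(1) by (simp add: square_integrable_def)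
    show "AE x in M. norm ((g x)\<^sup>2) \<le> norm ((f x)\<^sup>2)"
      using assms(3) by eventually_elim (simp add: abs_le_square_iff)
  qed (use assms(2) in simp)
  with assms(2) show ?thesis
    by (simp add: square_integrable_def)
qed

lemma square_integrable_abs:
  "square_integrable M f \<Longrightarrow> square_integrable M (\<lambda>x. \<bar>f x\<bar>)"
  by (rule square_integrable_dominated[of M f]) (auto simp: square_integrable_def)

lemma cauchy_schwarz_integral:
  assumes "square_integrable M f" "square_integrable M g"
  shows "\<bar>\<integral>x. f x * g x \<partial>M\<bar> \<le> sqrt (\<integral>x. (f x)\<^sup>2 \<partial>M) * sqrt (\<integral>x. (g x)\<^sup>2 \<partial>M)"
proof -
  have [measurable]: "f \<in> borel_measurable M" "g \<in> borel_measurable M"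
    using assms by (auto simp: square_integrable_def)
  have int: "integrable M (\<lambda>x. \<bar>f x\<bar> * \<bar>g x\<bar>)" "integrable M (\<lambda>x. (f x)\<^sup>2)" "integrable M (\<lambda>x. (g x)\<^sup>2)"
    using square_integrable_mult[OF square_integrable_abs[OF assms(1)] square_integrable_abs[OF assms(2)]]
      assms by (auto simp: square_integrable_def)
  have nn_fg: "(\<integral>\<^sup>+x. ennreal \<bar>f x\<bar> * ennreal \<bar>g x\<bar> \<partial>M) = ennreal (\<integral>x. \<bar>f x\<bar> * \<bar>g x\<bar> \<partial>M)"
    using int by (simp add: ennreal_mult[symmetric] nn_integral_eq_integral)
  have nn_f: "(\<integral>\<^sup>+x. ennreal \<bar>f x\<bar> ^ 2 \<partial>M) = ennreal (\<integral>x. (f x)\<^sup>2 \<partial>M)"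
    using int by (simp add: ennreal_power nn_integral_eq_integral)
  have nn_g: "(\<integral>\<^sup>+x. ennreal \<bar>g x\<bar> ^ 2 \<partial>M) = ennreal (\<integral>x. (g x)\<^sup>2 \<partial>M)"
    using int by (simp add: ennreal_power nn_integral_eq_integral)
  have "(\<integral>\<^sup>+x. ennreal \<bar>f x\<bar> * ennreal \<bar>g x\<bar> \<partial>M)\<^sup>2
      \<le> (\<integral>\<^sup>+x. ennreal \<bar>f x\<bar> ^ 2 \<partial>M) * (\<integral>\<^sup>+x. ennreal \<bar>g x\<bar> ^ 2 \<partial>M)"
    by (rule Cauchy_Schwarz_nn_integral) auto
  then have "ennreal (\<integral>x. \<bar>f x\<bar> * \<bar>g x\<bar> \<partial>M) ^ 2
      \<le> ennreal (\<integral>x. (f x)\<^sup>2 \<partial>M) * ennreal (\<integral>x. (g x)\<^sup>2 \<partial>M)"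
    unfolding nn_fg nn_f nn_g .
  then have "(\<integral>x. \<bar>f x\<bar> * \<bar>g x\<bar> \<partial>M)\<^sup>2 \<le> (\<integral>x. (f x)\<^sup>2 \<partial>M) * (\<integral>x. (g x)\<^sup>2 \<partial>M)"
    by (simp add: ennreal_power ennreal_mult[symmetric] integral_nonneg_AE)
  then have "(\<integral>x. \<bar>f x\<bar> * \<bar>g x\<bar> \<partial>M) \<le> sqrt (\<integral>x. (f x)\<^sup>2 \<partial>M) * sqrt (\<integral>x. (g x)\<^sup>2 \<partial>M)"
    by (metis real_le_rsqrt real_sqrt_mult)
  moreover have "\<bar>\<integral>x. f x * g x \<partial>M\<bar> \<le> (\<integral>x. \<bar>f x\<bar> * \<bar>g x\<bar> \<partial>M)"
    using integral_abs_bound[of M "\<lambda>x. f x * g x"] by (simp add: abs_mult)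
  ultimately show ?thesis by linarith
qed

context prob_space
begin

lemma covariance_eq:
  assumes "square_integrable M X" "square_integrable M Y"
  shows "covariance M X Y = (\<integral>\<omega>. X \<omega> * Y \<omega> \<partial>M) - expectation X * expectation Y"
proof -
  have int: "integrable M X" "integrable M Y" "integrable M (\<lambda>\<omega>. X \<omega> * Y \<omega>)"
    using assms square_integrable_mult[OF assms]
    by (auto intro: square_integrable_integrable finite_measure_axioms)
  have "(\<lambda>\<omega>. (X \<omega> - expectation X) * (Y \<omega> - expectation Y))
      = (\<lambda>\<omega>. X \<omega> * Y \<omega> - expectation Y * X \<omega> - expectation X * Y \<omega> + expectation X * expectation Y)"
    by (auto simp: fun_eq_iff algebra_simps)
  then show ?thesis
    unfolding covariance_def using int by (simp add: prob_space)
qed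

lemma covariance_add_left:
  assumes "square_integrable M X" "square_integrable M X'" "square_integrable M Y"
  shows "covariance M (\<lambda>\<omega>. X \<omega> + X' \<omega>) Y = covariance M X Y + covariance M X' Y"
proof -
  have "integrable M X" "integrable M X'" "integrable M (\<lambda>\<omega>. X \<omega> * Y \<omega>)" "integrable M (\<lambda>\<omega>. X' \<omega> * Y \<omega>)"
    using assms square_integrable_mult[of M _ Y]
    by (auto intro: square_integrable_integrable finite_measure_axioms)
  then show ?thesis
    using assms square_integrable_add[OF assms(1,2)]
    by (simp add: covariance_eq distrib_right)
qed

lemma covariance_add_right:
  assumes "square_integrable M X" "square_integrable M Y" "square_integrable M Y'"
  shows "covariance M X (\<lambda>\<omega>. Y \<omega> + Y' \<omega>) = covariance M X Y + covariance M X Y'"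
proof -
  have "integrable M Y" "integrable M Y'" "integrable M (\<lambda>\<omega>. X \<omega> * Y \<omega>)" "integrable M (\<lambda>\<omega>. X \<omega> * Y' \<omega>)"
    using assms square_integrable_mult[of M X]
    by (auto intro: square_integrable_integrable finite_measure_axioms)
  then show ?thesis
    using assms square_integrable_add[OF assms(2,3)]
    by (simp add: covariance_eq distrib_left)
qed

text \<open>Covariance is bounded by the product of the root mean squares (Cauchy--Schwarz applied to
  the centred variables, whose second moments do not exceed the raw second moments).\<close>
lemma covariance_abs_le:
  assumes "square_integrable M X" "square_integrable M Y"
  shows "\<bar>covariance M X Y\<bar> \<le> sqrt (expectation (\<lambda>\<omega>. (X \<omega>)\<^sup>2)) * sqrt (expectation (\<lambda>\<omega>. (Y \<omega>)\<^sup>2))"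
proof -
  have centred_le: "expectation (\<lambda>\<omega>. (Z \<omega> - expectation Z)\<^sup>2) \<le> expectation (\<lambda>\<omega>. (Z \<omega>)\<^sup>2)"
    if Z: "square_integrable M Z" for Z
  proof -
    have "integrable M Z" "integrable M (\<lambda>\<omega>. (Z \<omega>)\<^sup>2)"
      using Z by (auto simp: square_integrable_def intro: square_integrable_integrable finite_measure_axioms)
    then have "expectation (\<lambda>\<omega>. (Z \<omega> - expectation Z)\<^sup>2) = expectation (\<lambda>\<omega>. (Z \<omega>)\<^sup>2) - (expectation Z)\<^sup>2"
      by (rule variance_eq)
    then show ?thesis by simp
  qed
  have centred: "square_integrable M (\<lambda>\<omega>. Z \<omega> - expectation Z)" if "square_integrable M Z" for Z
    using that by (intro square_integrable_diff square_integrable_const finite_measure_axioms)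
  have "\<bar>covariance M X Y\<bar> \<le> sqrt (expectation (\<lambda>\<omega>. (X \<omega> - expectation X)\<^sup>2))
      * sqrt (expectation (\<lambda>\<omega>. (Y \<omega> - expectation Y)\<^sup>2))"
    unfolding covariance_def by (intro cauchy_schwarz_integral centred assms)
  also have "\<dots> \<le> sqrt (expectation (\<lambda>\<omega>. (X \<omega>)\<^sup>2)) * sqrt (expectation (\<lambda>\<omega>. (Y \<omega>)\<^sup>2))"
    by (intro mult_mono real_sqrt_le_mono centred_le assms) auto
  finally show ?thesis .
qed

lemma covariance_abs_le_bounds:
  assumes "square_integrable M X" "square_integrable M Y"
    and "expectation (\<lambda>\<omega>. (X \<omega>)\<^sup>2) \<le> a" "expectation (\<lambda>\<omega>. (Y \<omega>)\<^sup>2) \<le> b"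
  shows "\<bar>covariance M X Y\<bar> \<le> sqrt a * sqrt b"
proof -
  have "0 \<le> expectation (\<lambda>\<omega>. (X \<omega>)\<^sup>2)"
    by (simp add: integral_nonneg_AE)
  then have "0 \<le> a" using assms(3) by linarith
  then have "sqrt (expectation (\<lambda>\<omega>. (X \<omega>)\<^sup>2)) * sqrt (expectation (\<lambda>\<omega>. (Y \<omega>)\<^sup>2)) \<le> sqrt a * sqrt b"
    by (intro mult_mono real_sqrt_le_mono assms(3,4)) auto
  with covariance_abs_le[OF assms(1,2)] show ?thesis by linarith
qed

text \<open>If \<open>X\<close> and \<open>Y\<close> are mean-square close to uncorrelated variables \<open>A\<close> and \<open>B\<close>, their
  covariance is small: split \<open>X = A + (X - A)\<close>, \<open>Y = B + (Y - B)\<close> and bound the two cross terms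
  by Cauchy--Schwarz.\<close>
lemma covariance_near_uncorrelated:
  assumes sq: "square_integrable M A" "square_integrable M B" "square_integrable M X" "square_integrable M Y"
    and uncorrelated: "covariance M A B = 0"
    and moments: "expectation (\<lambda>\<omega>. (A \<omega>)\<^sup>2) \<le> a" "expectation (\<lambda>\<omega>. (Y \<omega>)\<^sup>2) \<le> a"
    and errors: "expectation (\<lambda>\<omega>. (X \<omega> - A \<omega>)\<^sup>2) \<le> \<delta>" "expectation (\<lambda>\<omega>. (Y \<omega> - B \<omega>)\<^sup>2) \<le> \<delta>"
  shows "\<bar>covariance M X Y\<bar> \<le> 2 * (sqrt a * sqrt \<delta>)"
proof -
  have sq_diff: "square_integrable M (\<lambda>\<omega>. X \<omega> - A \<omega>)" "square_integrable M (\<lambda>\<omega>. Y \<omega> - B \<omega>)"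
    using sq by (auto intro: square_integrable_diff)
  have "X = (\<lambda>\<omega>. A \<omega> + (X \<omega> - A \<omega>))" "Y = (\<lambda>\<omega>. B \<omega> + (Y \<omega> - B \<omega>))"
    by auto
  then have "covariance M X Y
      = covariance M A B + covariance M A (\<lambda>\<omega>. Y \<omega> - B \<omega>) + covariance M (\<lambda>\<omega>. X \<omega> - A \<omega>) Y"
    using sq sq_diff by (metis covariance_add_left covariance_add_right)
  moreover have "\<bar>covariance M A (\<lambda>\<omega>. Y \<omega> - B \<omega>)\<bar> \<le> sqrt a * sqrt \<delta>"
    by (rule covariance_abs_le_bounds[OF sq(1) sq_diff(2) moments(1) errors(2)])
  moreover have "\<bar>covariance M (\<lambda>\<omega>. X \<omega> - A \<omega>) Y\<bar> \<le> sqrt \<delta> * sqrt a"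
    by (rule covariance_abs_le_bounds[OF sq_diff(1) sq(4) errors(1) moments(2)])
  ultimately show ?thesis
    using uncorrelated by (simp add: mult.commute[of "sqrt \<delta>"])
qed

end

text \<open>A bound that decays geometrically in the number of whole blocks of length \<open>L\<close> beyond
  an offset \<open>m\<close> is a geometric bound in \<open>k\<close> itself, with rate \<open>\<rho> = \<sigma>\<^sup>1\<^sup>/\<^sup>L\<close>.\<close>
lemma geometric_rate_from_blocks:
  fixes a :: "nat \<Rightarrow> real" and s B :: real and L m :: nat
  assumes s: "0 \<le> s" "s < 1" and L: "0 < L" and B: "0 \<le> B"
    and bound: "\<And>k. a k \<le> B * s ^ ((k - m) div L)"
  shows "\<exists>C \<rho>. 0 < C \<and> 0 < \<rho> \<and> \<rho> < 1 \<and> (\<forall>k. a k \<le> C * \<rho> ^ k)"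
proof -
  define \<sigma> where "\<sigma> = max (1/2) s"
  have \<sigma>: "0 < \<sigma>" "\<sigma> < 1" "s \<le> \<sigma>"
    using s unfolding \<sigma>_def by auto
  define \<rho> where "\<rho> = root L \<sigma>"
  have \<rho>: "0 < \<rho>" "\<rho> < 1" "\<rho> ^ L = \<sigma>"
    using \<sigma> L unfolding \<rho>_def by (auto simp: real_root_gt_zero)
  define C where "C = (B + 1) / \<rho> ^ (L + m)"
  have "a k \<le> C * \<rho> ^ k" for k
  proof -
    define n where "n = (k - m) div L"
    have "k - m = n * L + (k - m) mod L"
      unfolding n_def by (rule div_mult_mod_eq[symmetric])
    moreover have "(k - m) mod L < L"
      using L by simp
    ultimately have "k \<le> n * L + L + m"
      by linarith
    then have "\<rho> ^ (n * L + L + m) \<le> \<rho> ^ k"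
      using \<rho> by (intro power_decreasing) auto
    moreover have "\<rho> ^ (n * L + L + m) = \<sigma> ^ n * \<rho> ^ (L + m)"
      by (simp add: power_add power_mult mult.commute[of n] \<rho>(3))
    ultimately have \<sigma>_n: "\<sigma> ^ n \<le> \<rho> ^ k / \<rho> ^ (L + m)"
      using \<rho> by (simp add: le_divide_eq)
    have "a k \<le> B * s ^ n"
      unfolding n_def by (rule bound)
    also have "\<dots> \<le> (B + 1) * \<sigma> ^ n"
      using B s \<sigma> by (intro mult_mono power_mono) auto
    also have "\<dots> \<le> (B + 1) * (\<rho> ^ k / \<rho> ^ (L + m))"
      using B \<sigma>_n by (intro mult_left_mono) auto
    also have "\<dots> = C * \<rho> ^ k"
      unfolding C_def by simp
    finally show ?thesis .
  qed
  moreover have "0 < C"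
    using B \<rho> unfolding C_def by simp
  ultimately show ?thesis
    using \<rho> by blast
qed

lemma scaled_bigo_geometric:
  fixes a :: "nat \<Rightarrow> real"
  assumes bound: "\<forall>k. \<bar>a k\<bar> \<le> C * \<rho> ^ k" and v: "0 < v" and \<rho>: "0 < \<rho>"
  shows "(\<lambda>k. a k / v) \<in> O(\<lambda>k. \<rho> ^ k)"
proof (rule bigoI[where c = "C / v"])
  show "\<forall>\<^sub>F k in at_top. norm (a k / v) \<le> C / v * norm (\<rho> ^ k)"
  proof (rule always_eventually, rule allI)
    fix k
    have "\<bar>a k\<bar> / v \<le> C * \<rho> ^ k / v"
      using bound v by (intro divide_right_mono) auto
    then show "norm (a k / v) \<le> C / v * norm (\<rho> ^ k)"
      using v \<rho> by (simp add: abs_mult)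
  qed
qed

definition depends_only_on :: "(('i \<Rightarrow> real) \<Rightarrow> 'b) \<Rightarrow> 'i set \<Rightarrow> bool" where
  "depends_only_on F I \<longleftrightarrow> (\<forall>x x'. (\<forall>i\<in>I. x i = x' i) \<longrightarrow> F x = F x')"

lemma depends_only_on_mono: "depends_only_on F I \<Longrightarrow> I \<subseteq> J \<Longrightarrow> depends_only_on F J"
  unfolding depends_only_on_def by blast

lemma depends_only_on_comp: "depends_only_on F I \<Longrightarrow> depends_only_on (\<lambda>x. g (F x)) I"
  unfolding depends_only_on_def by metis

text \<open>Functionals of an independent family reading disjoint sets of coordinates are
  independent, so the expectation of their product factorises.\<close>
lemma (in prob_space) integral_mult_disjoint_blocks:
  fixes X :: "'i \<Rightarrow> 'a \<Rightarrow> real" and F G :: "('i \<Rightarrow> real) \<Rightarrow> real"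
  assumes indep: "indep_vars (\<lambda>_. borel) X UNIV" and disjoint: "I \<inter> J = {}"
    and F_meas: "F \<in> borel_measurable (PiM UNIV (\<lambda>_. borel))"
    and G_meas: "G \<in> borel_measurable (PiM UNIV (\<lambda>_. borel))"
    and F_dep: "depends_only_on F I" and G_dep: "depends_only_on G J"
    and F_int: "integrable M (\<lambda>\<omega>. F (\<lambda>i. X i \<omega>))" and G_int: "integrable M (\<lambda>\<omega>. G (\<lambda>i. X i \<omega>))"
  shows "(\<integral>\<omega>. F (\<lambda>i. X i \<omega>) * G (\<lambda>i. X i \<omega>) \<partial>M)
       = (\<integral>\<omega>. F (\<lambda>i. X i \<omega>) \<partial>M) * (\<integral>\<omega>. G (\<lambda>i. X i \<omega>) \<partial>M)"
proof -
  text \<open>Extending a block of coordinates by zero recovers the whole sequence as far as a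
    functional depending only on that block is concerned.\<close>
  define extend where "extend K z = (\<lambda>i. if i \<in> K then z i else (0::real))" for K :: "'i set" and z
  have extend_meas: "extend K \<in> measurable (PiM K (\<lambda>_. borel)) (PiM UNIV (\<lambda>_. borel))" for K
    unfolding extend_def
  proof (rule measurable_PiM_single')
    fix i
    show "(\<lambda>z. if i \<in> K then z i else 0) \<in> borel_measurable (PiM K (\<lambda>_. borel))"
      by (cases "i \<in> K") (auto intro: measurable_component_singleton)
  qed auto
  have blocks: "indep_var (PiM I (\<lambda>_. borel)) (\<lambda>\<omega>. restrict (\<lambda>i. X i \<omega>) I)
      (PiM J (\<lambda>_. borel)) (\<lambda>\<omega>. restrict (\<lambda>i. X i \<omega>) J)"
    by (rule indep_var_restrict[OF indep disjoint]) auto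
  have "indep_var borel ((F \<circ> extend I) \<circ> (\<lambda>\<omega>. restrict (\<lambda>i. X i \<omega>) I))
      borel ((G \<circ> extend J) \<circ> (\<lambda>\<omega>. restrict (\<lambda>i. X i \<omega>) J))"
    by (rule indep_var_compose[OF blocks]) (auto intro: measurable_comp[OF extend_meas] F_meas G_meas)
  moreover have "(F \<circ> extend I) \<circ> (\<lambda>\<omega>. restrict (\<lambda>i. X i \<omega>) I) = (\<lambda>\<omega>. F (\<lambda>i. X i \<omega>))"
    using F_dep by (auto simp: depends_only_on_def extend_def fun_eq_iff)
  moreover have "(G \<circ> extend J) \<circ> (\<lambda>\<omega>. restrict (\<lambda>i. X i \<omega>) J) = (\<lambda>\<omega>. G (\<lambda>i. X i \<omega>))"
    using G_dep by (auto simp: depends_only_on_def extend_def fun_eq_iff)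
  ultimately have "indep_var borel (\<lambda>\<omega>. F (\<lambda>i. X i \<omega>)) borel (\<lambda>\<omega>. G (\<lambda>i. X i \<omega>))"
    by simp
  then show ?thesis
    using F_int G_int by (rule indep_var_lebesgue_integral)
qed

abbreviation seq_space :: "(int \<Rightarrow> real) measure" where
  "seq_space \<equiv> PiM UNIV (\<lambda>_. borel)"

locale iid_sequence = prob_space M for M :: "'a measure" +
  fixes e :: "int \<Rightarrow> 'a \<Rightarrow> real"
  assumes indep: "indep_vars (\<lambda>_. borel) e UNIV"
    and ident: "\<And>n. distr M borel (e n) = distr M borel (e 1)"
begin

abbreviation path :: "'a \<Rightarrow> int \<Rightarrow> real" where
  "path \<omega> \<equiv> (\<lambda>i. e i \<omega>)"

lemma e_measurable[measurable]: "e n \<in> borel_measurable M"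
  using indep unfolding indep_vars_def by auto

lemma path_measurable[measurable]: "path \<in> measurable M seq_space"
  by (rule measurable_PiM_single') auto

lemma shifted_path_measurable[measurable]: "(\<lambda>\<omega> i. e (i + t) \<omega>) \<in> measurable M seq_space"
  by (rule measurable_PiM_single') auto

text \<open>The law of an i.i.d.\ sequence is the infinite product of the common marginal, and
  this product is invariant under index shifts.\<close>
lemma shifted_path_distr:
  "distr M seq_space (\<lambda>\<omega> i. e (i + t) \<omega>) = PiM UNIV (\<lambda>_. distr M borel (e 1))"
proof -
  let ?D = "distr M borel (e 1)"
  have D_prob: "prob_space ?D" by (rule prob_space_distr) simp
  have "distr M seq_space (\<lambda>\<omega>. \<lambda>i\<in>UNIV. e i \<omega>) = (\<Pi>\<^sub>M i\<in>UNIV. distr M borel (e i))"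
    using indep_vars_iff_distr_eq_PiM[where I=UNIV and M'="\<lambda>_. borel" and X=e] indep by simp
  also have "\<dots> = PiM UNIV (\<lambda>_. ?D)"
    using ident by (intro PiM_cong) auto
  finally have law: "distr M seq_space path = PiM UNIV (\<lambda>_. ?D)"
    by (simp add: restrict_UNIV)
  have shift_meas: "(\<lambda>z i. z (i + t)) \<in> measurable seq_space seq_space"
    by (rule measurable_PiM_single') auto
  have "distr M seq_space (\<lambda>\<omega> i. e (i + t) \<omega>) = distr (distr M seq_space path) seq_space (\<lambda>z i. z (i + t))"
    by (subst distr_distr) (auto simp: comp_def shift_meas)
  also have "\<dots> = distr (PiM UNIV (\<lambda>_. ?D)) (PiM UNIV (\<lambda>_. ?D)) (\<lambda>z. \<lambda>i\<in>UNIV. z (i + t))"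
    unfolding law by (intro distr_cong) (auto intro!: sets_PiM_cong)
  also have "\<dots> = PiM UNIV (\<lambda>_. ?D)"
    by (rule distr_PiM_reindex) (auto simp: D_prob inj_on_def)
  finally show ?thesis .
qed

lemma integral_shift_invariant:
  fixes F :: "(int \<Rightarrow> real) \<Rightarrow> real"
  assumes [measurable]: "F \<in> borel_measurable seq_space"
  shows "(\<integral>\<omega>. F (\<lambda>i. e (i + t) \<omega>) \<partial>M) = (\<integral>\<omega>. F (path \<omega>) \<partial>M)"
proof -
  have "(\<integral>\<omega>. F (\<lambda>i. e (i + t) \<omega>) \<partial>M) = integral\<^sup>L (distr M seq_space (\<lambda>\<omega> i. e (i + t) \<omega>)) F"
    using integral_distr[of "\<lambda>\<omega> i. e (i + t) \<omega>" M seq_space F] by simp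
  also have "\<dots> = integral\<^sup>L (distr M seq_space (\<lambda>\<omega> i. e (i + 0) \<omega>)) F"
    unfolding shifted_path_distr ..
  also have "\<dots> = (\<integral>\<omega>. F (path \<omega>) \<partial>M)"
    using integral_distr[of "\<lambda>\<omega> i. e (i + 0) \<omega>" M seq_space F] by simp
  finally show ?thesis .
qed

lemma integral_mult_disjoint_windows:
  fixes F G :: "(int \<Rightarrow> real) \<Rightarrow> real"
  assumes "I \<inter> J = {}"
    and "F \<in> borel_measurable seq_space" "G \<in> borel_measurable seq_space"
    and "depends_only_on F I" "depends_only_on G J"
    and "integrable M (\<lambda>\<omega>. F (path \<omega>))" "integrable M (\<lambda>\<omega>. G (path \<omega>))"
  shows "(\<integral>\<omega>. F (path \<omega>) * G (path \<omega>) \<partial>M) = (\<integral>\<omega>. F (path \<omega>) \<partial>M) * (\<integral>\<omega>. G (path \<omega>) \<partial>M)"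
  by (rule integral_mult_disjoint_blocks[OF indep assms])

end

text \<open>The deterministic part: the two regime values of a threshold MA(\<open>q\<close>) recursion with
  delay \<open>d\<close> as functionals of a noise path \<open>x\<close>, and the chain obtained by running the recursion
  along the times \<open>m, m + d, m + 2 d, \<dots>\<close> from an arbitrary start (the value of regime 2 at \<open>m\<close>).\<close>
locale setar_recursion =
  fixes q d :: nat and r \<mu>1 \<mu>2 :: real and \<phi> \<psi> :: "nat \<Rightarrow> real"
begin

definition regime1 :: "(int \<Rightarrow> real) \<Rightarrow> int \<Rightarrow> real" where
  "regime1 x n = \<mu>1 + x n + (\<Sum>i=1..q. \<phi> i * x (n - int i))"

definition regime2 :: "(int \<Rightarrow> real) \<Rightarrow> int \<Rightarrow> real" where
  "regime2 x n = \<mu>2 + x n + (\<Sum>i=1..q. \<psi> i * x (n - int i))"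

definition regimes_agree :: "(int \<Rightarrow> real) \<Rightarrow> int \<Rightarrow> bool" where
  "regimes_agree x n \<longleftrightarrow>
     (regime2 x n \<le> r \<and> regime1 x n \<le> r) \<or> (regime2 x n > r \<and> regime1 x n > r)"

text \<open>The envelope dominates every quantity the recursion can produce at time \<open>n\<close>.\<close>
definition envelope :: "(int \<Rightarrow> real) \<Rightarrow> int \<Rightarrow> real" where
  "envelope x n = \<bar>regime1 x n\<bar> + \<bar>regime2 x n\<bar>"

fun chain :: "(int \<Rightarrow> real) \<Rightarrow> int \<Rightarrow> nat \<Rightarrow> real" where
  "chain x m 0 = regime2 x m"
| "chain x m (Suc j) =
     (let n = m + int (Suc j) * int d in if chain x m j \<le> r then regime1 x n else regime2 x n)"

lemma regime1_measurable[measurable]: "(\<lambda>x. regime1 x n) \<in> borel_measurable seq_space"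
  unfolding regime1_def by measurable

lemma regime2_measurable[measurable]: "(\<lambda>x. regime2 x n) \<in> borel_measurable seq_space"
  unfolding regime2_def by measurable

lemma regimes_agree_measurable[measurable]: "Measurable.pred seq_space (\<lambda>x. regimes_agree x n)"
  unfolding regimes_agree_def by measurable

lemma envelope_measurable[measurable]: "(\<lambda>x. envelope x n) \<in> borel_measurable seq_space"
  unfolding envelope_def by measurable

lemma chain_measurable[measurable]: "(\<lambda>x. chain x m j) \<in> borel_measurable seq_space"
proof (induction j)
  case (Suc j)
  note [measurable] = Suc
  show ?case by (simp add: Let_def) measurable
qed simp

lemma regime_window:
  "depends_only_on (\<lambda>x. regime1 x n) {n - int q..n}"
  "depends_only_on (\<lambda>x. regime2 x n) {n - int q..n}"
  unfolding depends_only_on_def regime1_def regime2_def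
  by (auto intro!: sum.cong arg_cong2[where f="(+)"])

lemma regimes_agree_window: "depends_only_on (\<lambda>x. regimes_agree x n) {n - int q..n}"
  using regime_window unfolding depends_only_on_def regimes_agree_def by metis

lemma envelope_window: "depends_only_on (\<lambda>x. (envelope x n)\<^sup>2) {n - int q..n}"
  using regime_window unfolding depends_only_on_def envelope_def by metis

lemma chain_window: "depends_only_on (\<lambda>x. chain x m j) {m - int q..m + int j * int d}"
proof (induction j)
  case 0
  show ?case using regime_window(2)[of m] by simp
next
  case (Suc j)
  let ?n = "m + int (Suc j) * int d"
  have window: "{m - int q..m + int j * int d} \<subseteq> {m - int q..?n}" "{?n - int q..?n} \<subseteq> {m - int q..?n}"
    by (auto simp: algebra_simps)
  have "depends_only_on (\<lambda>x. chain x m j) {m - int q..?n}"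
    "depends_only_on (\<lambda>x. regime1 x ?n) {m - int q..?n}"
    "depends_only_on (\<lambda>x. regime2 x ?n) {m - int q..?n}"
    using depends_only_on_mono[OF Suc.IH window(1)] depends_only_on_mono[OF regime_window(1) window(2)]
      depends_only_on_mono[OF regime_window(2) window(2)] by auto
  then show ?case
    unfolding depends_only_on_def by (simp add: Let_def del: of_nat_Suc) metis
qed

lemma regimes_agree_shift: "regimes_agree (\<lambda>i. x (i + m)) 0 = regimes_agree x m"
  by (simp add: regimes_agree_def regime1_def regime2_def algebra_simps)

lemma envelope_shift: "envelope (\<lambda>i. x (i + m)) 0 = envelope x m"
  by (simp add: envelope_def regime1_def regime2_def algebra_simps)

lemma chain_le_envelope: "\<bar>chain x m j\<bar> \<le> envelope x (m + int j * int d)"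
  by (cases j) (auto simp: envelope_def Let_def)

text \<open>At a time where the two regimes agree, the side of \<open>r\<close> on which \<open>Y\<close> falls does not depend
  on the past; from then on \<open>Y\<close> coincides with any chain, whatever its initial value.\<close>
context
  fixes x Y :: "int \<Rightarrow> real"
  assumes solves: "\<And>n. Y n = (if Y (n - int d) \<le> r then regime1 x n else regime2 x n)"
begin

lemma solution_le_envelope: "\<bar>Y n\<bar> \<le> envelope x n"
  using solves[of n] by (auto simp: envelope_def)

lemma chain_same_side:
  "\<exists>i\<le>j. regimes_agree x (m + int i * int d) \<Longrightarrow> Y (m + int j * int d) \<le> r \<longleftrightarrow> chain x m j \<le> r"
proof (induction j)
  case 0
  then show ?case using solves[of m] unfolding regimes_agree_def by auto
next
  case (Suc j)
  have prev: "m + int (Suc j) * int d - int d = m + int j * int d"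
    by (simp add: algebra_simps)
  show ?case
  proof (cases "\<exists>i\<le>j. regimes_agree x (m + int i * int d)")
    case True
    then show ?thesis
      using Suc.IH solves[of "m + int (Suc j) * int d"] unfolding prev by (simp add: Let_def del: of_nat_Suc)
  next
    case False
    with Suc.prems have "regimes_agree x (m + int (Suc j) * int d)"
      using le_Suc_eq by blast
    then show ?thesis
      using solves[of "m + int (Suc j) * int d"] unfolding regimes_agree_def
      by (auto simp: Let_def simp del: of_nat_Suc)
  qed
qed

lemma chain_coupling:
  assumes "\<exists>i<j. regimes_agree x (m + int i * int d)"
  shows "Y (m + int j * int d) = chain x m j"
proof -
  obtain j' where j: "j = Suc j'"
    using assms by (cases j) auto
  have "Y (m + int j' * int d) \<le> r \<longleftrightarrow> chain x m j' \<le> r"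
    using assms unfolding j by (intro chain_same_side) (auto simp: less_Suc_eq_le)
  moreover have prev: "m + int (Suc j') * int d - int d = m + int j' * int d"
    by (simp add: algebra_simps)
  ultimately show ?thesis
    using solves[of "m + int (Suc j') * int d"] unfolding j prev by (simp add: Let_def del: of_nat_Suc)
qed

end

end

locale threshold_ma_process = iid_sequence M e + setar_recursion q d r \<mu>1 \<mu>2 \<phi> \<psi>
  for M :: "'a measure" and e :: "int \<Rightarrow> 'a \<Rightarrow> real" and q d r \<mu>1 \<mu>2 \<phi> \<psi> +
  fixes y :: "int \<Rightarrow> 'a \<Rightarrow> real"
  assumes noise_L2: "integrable M (\<lambda>\<omega>. \<bar>e 1 \<omega>\<bar>\<^sup>2)"
    and delay: "d \<ge> 1"
    and nondeg: "measure M {\<omega>\<in>space M.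
             \<mu>2 + e 0 \<omega> + (\<Sum>i=1..q. \<psi> i * e (0 - int i) \<omega>) \<le> r \<and>
             \<mu>1 + e 0 \<omega> + (\<Sum>i=1..q. \<phi> i * e (0 - int i) \<omega>) \<le> r}
         + measure M {\<omega>\<in>space M.
             \<mu>2 + e 0 \<omega> + (\<Sum>i=1..q. \<psi> i * e (0 - int i) \<omega>) > r \<and>
             \<mu>1 + e 0 \<omega> + (\<Sum>i=1..q. \<phi> i * e (0 - int i) \<omega>) > r} \<noteq> 0"
    and y_measurable[measurable]: "\<And>n. y n \<in> borel_measurable M"
    and y_eq: "\<And>n. AE \<omega> in M. y n \<omega> =
        (if y (n - int d) \<omega> \<le> r
         then \<mu>1 + e n \<omega> + (\<Sum>i=1..q. \<phi> i * e (n - int i) \<omega>)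
         else \<mu>2 + e n \<omega> + (\<Sum>i=1..q. \<psi> i * e (n - int i) \<omega>))"
begin

lemma noise_square_integrable: "square_integrable M (e n)"
proof -
  have "integrable (distr M borel (e 1)) (\<lambda>z. z\<^sup>2)"
    using noise_L2 by (subst integrable_distr_eq) auto
  then have "integrable (distr M borel (e n)) (\<lambda>z. z\<^sup>2)"
    unfolding ident[of n] .
  then show ?thesis
    by (subst (asm) integrable_distr_eq) (auto simp: square_integrable_def)
qed

lemma envelope_square_integrable: "square_integrable M (\<lambda>\<omega>. envelope (path \<omega>) n)"
  unfolding envelope_def regime1_def regime2_def
  by (intro square_integrable_add square_integrable_abs square_integrable_const square_integrable_sum
      square_integrable_cmult noise_square_integrable finite_measure_axioms) auto

lemma solves_AE:
  "AE \<omega> in M. \<forall>n. y n \<omega> = (if y (n - int d) \<omega> \<le> r then regime1 (path \<omega>) n else regime2 (path \<omega>) n)"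
  unfolding AE_all_countable regime1_def regime2_def using y_eq by simp

lemma y_le_envelope: "AE \<omega> in M. \<bar>y n \<omega>\<bar> \<le> envelope (path \<omega>) n"
  using solves_AE by eventually_elim (rule solution_le_envelope, blast)

lemma y_square_integrable: "square_integrable M (y n)"
proof (rule square_integrable_dominated[OF envelope_square_integrable[of n]])
  show "AE \<omega> in M. \<bar>y n \<omega>\<bar> \<le> \<bar>envelope (path \<omega>) n\<bar>"
    using y_le_envelope[of n] by eventually_elim auto
qed simp

text \<open>The second moment of the envelope and the probability that the regimes agree; by shift
  invariance neither depends on the time.\<close>
definition K :: real where
  "K = expectation (\<lambda>\<omega>. (envelope (path \<omega>) 0)\<^sup>2)"

definition p :: real where
  "p = expectation (\<lambda>\<omega>. of_bool (regimes_agree (path \<omega>) 0))"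

lemma envelope_second_moment: "expectation (\<lambda>\<omega>. (envelope (path \<omega>) t)\<^sup>2) = K"
  unfolding K_def using integral_shift_invariant[of "\<lambda>x. (envelope x 0)\<^sup>2" t]
  using envelope_shift[of "\<lambda>i. e i _" t] by simp

lemma agreement_probability: "expectation (\<lambda>\<omega>. of_bool (regimes_agree (path \<omega>) t)) = p"
  unfolding p_def using integral_shift_invariant[of "\<lambda>x. of_bool (regimes_agree x 0)" t]
  using regimes_agree_shift[of "\<lambda>i. e i _" t] by simp

lemma K_nonneg: "0 \<le> K"
  unfolding K_def by (simp add: integral_nonneg_AE)

lemma p_pos: "0 < p"
proof -
  define S1 where "S1 = {\<omega>\<in>space M. regime2 (path \<omega>) 0 \<le> r \<and> regime1 (path \<omega>) 0 \<le> r}"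
  define S2 where "S2 = {\<omega>\<in>space M. regime2 (path \<omega>) 0 > r \<and> regime1 (path \<omega>) 0 > r}"
  have sets: "S1 \<in> sets M" "S2 \<in> sets M"
    unfolding S1_def S2_def by measurable
  have "p = expectation (indicator (S1 \<union> S2))"
    unfolding p_def S1_def S2_def regimes_agree_def
    by (intro Bochner_Integration.integral_cong) (auto simp: indicator_def)
  also have "\<dots> = prob S1 + prob S2"
    using sets by (auto simp: S1_def S2_def intro!: finite_measure_Union)
  finally have "p = prob S1 + prob S2" .
  moreover have "prob S1 + prob S2 \<noteq> 0"
    using nondeg unfolding S1_def S2_def regime1_def regime2_def by simp
  ultimately show ?thesis
    by (simp add: less_le add_nonneg_nonneg)
qed

lemma integrable_of_bool: "Measurable.pred M P \<Longrightarrow> integrable M (\<lambda>\<omega>. of_bool (P \<omega>) :: real)"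
  by (rule integrable_const_bound[where B=1]) auto

lemma p_le_1: "p \<le> 1"
proof -
  have "p \<le> expectation (\<lambda>\<omega>. 1)"
    unfolding p_def by (intro integral_mono integrable_of_bool) auto
  then show ?thesis by (simp add: prob_space)
qed

text \<open>Checkpoints are spaced \<open>L = d (q + 1)\<close> apart: the chain between two checkpoints performs
  \<open>q + 1\<close> steps, and the noise windows of distinct checkpoints are disjoint.\<close>
definition block :: nat where
  "block = d * (q + 1)"

lemma block_bounds: "q + 1 \<le> block" "0 < block"
  using mult_le_mono1[OF delay, of "q + 1"] unfolding block_def by auto

definition no_agreement :: "int \<Rightarrow> nat \<Rightarrow> (int \<Rightarrow> real) \<Rightarrow> bool" where
  "no_agreement s n x \<longleftrightarrow> (\<forall>l<n. \<not> regimes_agree x (s + int l * int block))"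

lemma no_agreement_measurable[measurable]: "Measurable.pred seq_space (no_agreement s n)"
  unfolding no_agreement_def by measurable

lemma no_agreement_window:
  "depends_only_on (no_agreement s n) {..< s + int n * int block - int q}"
proof -
  let ?W = "{..< s + int n * int block - int q}"
  have window: "{s + int l * int block - int q..s + int l * int block} \<subseteq> ?W" if "l < n" for l
  proof -
    have "(l + 1) * block \<le> n * block" using that by (intro mult_right_mono) auto
    then have "int l * int block + int q < int n * int block"
      using block_bounds by (simp flip: of_nat_mult of_nat_add)
    then show ?thesis by auto
  qed
  have "depends_only_on (\<lambda>x. regimes_agree x (s + int l * int block)) ?W" if "l < n" for l
    using depends_only_on_mono[OF regimes_agree_window window[OF that]] .
  then show ?thesis
    unfolding depends_only_on_def no_agreement_def by blast
qed

text \<open>Agreement at distinct checkpoints happens independently, each with probability \<open>p\<close>.\<close>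
lemma no_agreement_probability:
  "expectation (\<lambda>\<omega>. of_bool (no_agreement s n (path \<omega>))) = (1 - p) ^ n"
proof (induction n)
  case 0
  then show ?case by (simp add: no_agreement_def prob_space)
next
  case (Suc n)
  let ?F = "\<lambda>x. of_bool (no_agreement s n x) :: real"
  let ?t = "s + int n * int block"
  let ?G = "\<lambda>x. 1 - of_bool (regimes_agree x ?t) :: real"
  have "no_agreement s (Suc n) x \<longleftrightarrow> no_agreement s n x \<and> \<not> regimes_agree x ?t" for x
    unfolding no_agreement_def by (auto simp: less_Suc_eq)
  then have "expectation (\<lambda>\<omega>. of_bool (no_agreement s (Suc n) (path \<omega>)))
      = expectation (\<lambda>\<omega>. ?F (path \<omega>) * ?G (path \<omega>))"
    by (simp add: of_bool_conj of_bool_not_iff)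
  also have "\<dots> = expectation (\<lambda>\<omega>. ?F (path \<omega>)) * expectation (\<lambda>\<omega>. ?G (path \<omega>))"
  proof (rule integral_mult_disjoint_windows[where I="{..< ?t - int q}" and J="{?t - int q .. ?t}"])
    show "depends_only_on ?F {..< ?t - int q}"
      using no_agreement_window by (rule depends_only_on_comp)
    show "depends_only_on ?G {?t - int q .. ?t}"
      using regimes_agree_window by (rule depends_only_on_comp)
  qed (auto intro!: Bochner_Integration.integrable_diff integrable_of_bool)
  also have "expectation (\<lambda>\<omega>. ?G (path \<omega>)) = 1 - p"
    using agreement_probability[of ?t]
    by (subst Bochner_Integration.integral_diff) (auto intro: integrable_of_bool simp: prob_space)
  finally show ?case
    using Suc.IH by simp
qed

text \<open>The event of no agreement before \<open>t - q\<close> is independent of the envelope at \<open>t\<close>.\<close>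
lemma no_agreement_envelope:
  "expectation (\<lambda>\<omega>. of_bool (no_agreement (t - int n * int block) n (path \<omega>)) * (envelope (path \<omega>) t)\<^sup>2)
    = (1 - p) ^ n * K"
proof -
  have "expectation (\<lambda>\<omega>. of_bool (no_agreement (t - int n * int block) n (path \<omega>)) * (envelope (path \<omega>) t)\<^sup>2)
    = expectation (\<lambda>\<omega>. of_bool (no_agreement (t - int n * int block) n (path \<omega>)))
      * expectation (\<lambda>\<omega>. (envelope (path \<omega>) t)\<^sup>2)"
  proof (rule integral_mult_disjoint_windows[where I="{..< t - int q}" and J="{t - int q .. t}"])
    have "t - int n * int block + int n * int block - int q = t - int q"
      by simp
    then show "depends_only_on (\<lambda>x. of_bool (no_agreement (t - int n * int block) n x)) {..< t - int q}"
      using depends_only_on_comp[OF no_agreement_window[of "t - int n * int block" n]] by metis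
    show "integrable M (\<lambda>\<omega>. (envelope (path \<omega>) t)\<^sup>2)"
      using envelope_square_integrable by (simp add: square_integrable_def)
  qed (auto intro: envelope_window integrable_of_bool)
  then show ?thesis
    using no_agreement_probability envelope_second_moment by simp
qed

text \<open>The approximation of \<open>y t\<close>: the chain started \<open>n\<close> blocks before \<open>t\<close>, whose step count
  \<open>n (q + 1)\<close> makes it end exactly at \<open>t\<close>.\<close>
definition approx :: "int \<Rightarrow> nat \<Rightarrow> 'a \<Rightarrow> real" where
  "approx t n \<omega> = chain (path \<omega>) (t - int n * int block) (n * (q + 1))"

lemma approx_end: "t - int n * int block + int (n * (q + 1)) * int d = t"
  unfolding block_def by (simp add: algebra_simps)

lemma approx_measurable[measurable]: "approx t n \<in> borel_measurable M"
  unfolding approx_def by measurable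

lemma approx_window:
  "depends_only_on (\<lambda>x. chain x (t - int n * int block) (n * (q + 1))) {t - int n * int block - int q .. t}"
  using chain_window[of "t - int n * int block" "n * (q + 1)"] by (simp only: approx_end)

lemma approx_le_envelope: "\<bar>approx t n \<omega>\<bar> \<le> envelope (path \<omega>) t"
  using chain_le_envelope[of "path \<omega>" "t - int n * int block" "n * (q + 1)"]
  unfolding approx_def by (simp only: approx_end)

lemma approx_square_integrable: "square_integrable M (approx t n)"
proof (rule square_integrable_dominated[OF envelope_square_integrable[of t]])
  show "AE \<omega> in M. \<bar>approx t n \<omega>\<bar> \<le> \<bar>envelope (path \<omega>) t\<bar>"
    using approx_le_envelope[of t n] by (intro AE_I2) (meson abs_ge_self order_trans)
qed simp

text \<open>Off the event that no checkpoint shows agreement, the coupling makes the approximation exact.\<close>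
lemma approx_error_pointwise:
  "AE \<omega> in M. \<bar>y t \<omega> - approx t n \<omega>\<bar>
      \<le> 2 * of_bool (no_agreement (t - int n * int block) n (path \<omega>)) * envelope (path \<omega>) t"
  using solves_AE
proof eventually_elim
  case (elim \<omega>)
  then have solves: "\<And>m. y m \<omega> = (if y (m - int d) \<omega> \<le> r then regime1 (path \<omega>) m else regime2 (path \<omega>) m)"
    by blast
  show ?case
  proof (cases "no_agreement (t - int n * int block) n (path \<omega>)")
    case True
    have "\<bar>y t \<omega> - approx t n \<omega>\<bar> \<le> \<bar>y t \<omega>\<bar> + \<bar>approx t n \<omega>\<bar>" by simp
    also have "\<dots> \<le> 2 * envelope (path \<omega>) t"
      using solution_le_envelope[OF solves, of t] approx_le_envelope[of t n \<omega>] by simp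
    finally show ?thesis using True by simp
  next
    case False
    then obtain l where l: "l < n" "regimes_agree (path \<omega>) (t - int n * int block + int l * int block)"
      unfolding no_agreement_def by auto
    have "l * (q + 1) < n * (q + 1)"
      using l(1) by (intro mult_less_mono1) auto
    moreover have "int (l * (q + 1)) * int d = int l * int block"
      unfolding block_def by (simp add: algebra_simps)
    ultimately have "\<exists>i<n * (q + 1). regimes_agree (path \<omega>) (t - int n * int block + int i * int d)"
      using l(2) by (intro exI[of _ "l * (q + 1)"]) simp
    from chain_coupling[OF solves this] have "y t \<omega> = approx t n \<omega>"
      unfolding approx_def approx_end .
    then show ?thesis using False by simp
  qed
qed

lemma approx_error:
  "expectation (\<lambda>\<omega>. (y t \<omega> - approx t n \<omega>)\<^sup>2) \<le> 4 * K * (1 - p) ^ n"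
proof -
  let ?I = "\<lambda>\<omega>. of_bool (no_agreement (t - int n * int block) n (path \<omega>)) :: real"
  have "expectation (\<lambda>\<omega>. (y t \<omega> - approx t n \<omega>)\<^sup>2) \<le> expectation (\<lambda>\<omega>. 4 * (?I \<omega> * (envelope (path \<omega>) t)\<^sup>2))"
  proof (rule integral_mono_AE)
    show "integrable M (\<lambda>\<omega>. (y t \<omega> - approx t n \<omega>)\<^sup>2)"
      using square_integrable_diff[OF y_square_integrable approx_square_integrable]
      by (simp add: square_integrable_def)
    have "integrable M (\<lambda>\<omega>. (envelope (path \<omega>) t)\<^sup>2)"
      using envelope_square_integrable by (simp add: square_integrable_def)
    then have "integrable M (\<lambda>\<omega>. ?I \<omega> * (envelope (path \<omega>) t)\<^sup>2)"
      by (rule Bochner_Integration.integrable_bound) auto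
    then show "integrable M (\<lambda>\<omega>. 4 * (?I \<omega> * (envelope (path \<omega>) t)\<^sup>2))"
      by simp
    show "AE \<omega> in M. (y t \<omega> - approx t n \<omega>)\<^sup>2 \<le> 4 * (?I \<omega> * (envelope (path \<omega>) t)\<^sup>2)"
      using approx_error_pointwise[of t n]
    proof eventually_elim
      case (elim \<omega>)
      then have "\<bar>y t \<omega> - approx t n \<omega>\<bar>\<^sup>2 \<le> (2 * ?I \<omega> * envelope (path \<omega>) t)\<^sup>2"
        by (intro power_mono) auto
      then show ?case
        by (cases "no_agreement (t - int n * int block) n (path \<omega>)") (simp_all add: power2_eq_square)
    qed
  qed
  also have "\<dots> = 4 * ((1 - p) ^ n * K)"
    using no_agreement_envelope[of t n] by simp
  finally show ?thesis by (simp add: algebra_simps)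
qed

lemma second_moment_le_K:
  assumes "AE \<omega> in M. \<bar>Z \<omega>\<bar> \<le> envelope (path \<omega>) t" "square_integrable M Z"
  shows "expectation (\<lambda>\<omega>. (Z \<omega>)\<^sup>2) \<le> K"
proof -
  have "expectation (\<lambda>\<omega>. (Z \<omega>)\<^sup>2) \<le> expectation (\<lambda>\<omega>. (envelope (path \<omega>) t)\<^sup>2)"
    using assms(2) envelope_square_integrable[of t]
  proof (intro integral_mono_AE)
    show "AE \<omega> in M. (Z \<omega>)\<^sup>2 \<le> (envelope (path \<omega>) t)\<^sup>2"
      using assms(1) by eventually_elim (simp add: abs_le_square_iff[symmetric])
  qed (auto simp: square_integrable_def)
  then show ?thesis
    using envelope_second_moment by simp
qed

text \<open>Approximations built on disjoint windows are independent, hence uncorrelated.\<close>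
lemma approx_uncorrelated:
  assumes "int n * int block + int q < k"
  shows "covariance M (approx 0 n) (approx k n) = 0"
proof -
  have int: "integrable M (\<lambda>\<omega>. chain (path \<omega>) (t - int n * int block) (n * (q + 1)))" for t
    using square_integrable_integrable[OF approx_square_integrable finite_measure_axioms]
    unfolding approx_def .
  have "expectation (\<lambda>\<omega>. approx 0 n \<omega> * approx k n \<omega>) = expectation (approx 0 n) * expectation (approx k n)"
    unfolding approx_def
    by (rule integral_mult_disjoint_windows[OF _ chain_measurable chain_measurable
          approx_window approx_window int int]) (use assms in auto)
  then show ?thesis
    by (simp add: covariance_eq approx_square_integrable)
qed

text \<open>Main estimate: \<open>y 0\<close> and \<open>y k\<close> are mean-square close to their approximations, which
  are uncorrelated once the lag exceeds \<open>n L + q\<close>.\<close>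
lemma covariance_decay:
  assumes "int n * int block + int q < k"
  shows "\<bar>covariance M (y 0) (y k)\<bar> \<le> 4 * K * sqrt (1 - p) ^ n"
proof -
  have "\<bar>covariance M (y 0) (y k)\<bar> \<le> 2 * (sqrt K * sqrt (4 * K * (1 - p) ^ n))"
  proof (rule covariance_near_uncorrelated[OF approx_square_integrable approx_square_integrable
        y_square_integrable y_square_integrable approx_uncorrelated[OF assms]])
    show "expectation (\<lambda>\<omega>. (approx 0 n \<omega>)\<^sup>2) \<le> K"
      by (rule second_moment_le_K[OF _ approx_square_integrable]) (auto intro: approx_le_envelope)
    show "expectation (\<lambda>\<omega>. (y k \<omega>)\<^sup>2) \<le> K"
      by (rule second_moment_le_K[OF y_le_envelope y_square_integrable])
  qed (rule approx_error)+
  also have "sqrt K * sqrt (4 * K * (1 - p) ^ n) = sqrt ((2 * K)\<^sup>2 * (1 - p) ^ n)"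
    by (simp add: real_sqrt_mult[symmetric] power2_eq_square mult_ac)
  also have "\<dots> = 2 * K * sqrt (1 - p) ^ n"
    using K_nonneg by (simp add: real_sqrt_mult real_sqrt_power)
  finally show ?thesis
    by simp
qed

text \<open>For small lags there is only the trivial bound.\<close>
lemma covariance_trivial_bound: "\<bar>covariance M (y 0) (y k)\<bar> \<le> K"
proof -
  have "\<bar>covariance M (y 0) (y k)\<bar> \<le> sqrt K * sqrt K"
    by (intro covariance_abs_le_bounds y_square_integrable second_moment_le_K[OF y_le_envelope])
  then show ?thesis
    using K_nonneg by simp
qed

text \<open>Uniform form: with \<open>n\<close> the number of whole blocks that fit into the gap \<open>k - q - 1\<close>.\<close>
lemma covariance_bound:
  "\<bar>covariance M (y 0) (y (int k))\<bar> \<le> 4 * K * sqrt (1 - p) ^ ((k - (q + 1)) div block)"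
proof (cases "q < k")
  case True
  let ?n = "(k - (q + 1)) div block"
  have "?n * block \<le> k - (q + 1)"
    by simp
  then have "?n * block + q < k"
    using True by linarith
  then have "int ?n * int block + int q < int k"
    by (simp flip: of_nat_mult of_nat_add)
  then show ?thesis
    by (rule covariance_decay)
next
  case False
  then show ?thesis
    using covariance_trivial_bound[of "int k"] K_nonneg by simp
qed

end

theorem theorem3p1:
  fixes M :: "'a measure" and e y :: "int \<Rightarrow> 'a \<Rightarrow> real"
    and q d :: nat and r \<mu>1 \<mu>2 :: real and \<phi> \<psi> :: "nat \<Rightarrow> real"
  assumes P: "prob_space M"
    and e_indep: "prob_space.indep_vars M (\<lambda>_. borel) e UNIV"
    and e_ident: "\<And>n. distr M borel (e n) = distr M borel (e 1)"
    and e_L2: "integrable M (\<lambda>\<omega>. \<bar>e 1 \<omega>\<bar>\<^sup>2)"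
    and q: "q \<ge> 1" and d: "d \<ge> 1"
    and nondeg: "\<And>n. measure M {\<omega>\<in>space M.
             \<mu>2 + e n \<omega> + (\<Sum>i=1..q. \<psi> i * e (n - int i) \<omega>) \<le> r \<and>
             \<mu>1 + e n \<omega> + (\<Sum>i=1..q. \<phi> i * e (n - int i) \<omega>) \<le> r}
         + measure M {\<omega>\<in>space M.
             \<mu>2 + e n \<omega> + (\<Sum>i=1..q. \<psi> i * e (n - int i) \<omega>) > r \<and>
             \<mu>1 + e n \<omega> + (\<Sum>i=1..q. \<phi> i * e (n - int i) \<omega>) > r} \<noteq> 0"
    and y_meas: "\<And>n. y n \<in> borel_measurable M"
    and y_stat: "strictly_stationary M y"
    and y_eq: "\<And>n. AE \<omega> in M. y n \<omega> =
        (if y (n - int d) \<omega> \<le> r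
         then \<mu>1 + e n \<omega> + (\<Sum>i=1..q. \<phi> i * e (n - int i) \<omega>)
         else \<mu>2 + e n \<omega> + (\<Sum>i=1..q. \<psi> i * e (n - int i) \<omega>))"
  shows "integrable M (\<lambda>\<omega>. (y 0 \<omega>)\<^sup>2) \<and>
    (\<exists>C \<rho>. C > 0 \<and> 0 < \<rho> \<and> \<rho> < 1 \<and>
       (\<forall>k::nat. k \<ge> 1 \<longrightarrow> \<bar>covariance M (y 0) (y (int k))\<bar> \<le> C * \<rho> ^ k) \<and>
       (covariance M (y 0) (y 0) > 0 \<longrightarrow>
          (\<lambda>k::nat. covariance M (y 0) (y (int k)) / covariance M (y 0) (y 0))
            \<in> O(\<lambda>k. \<rho> ^ k)))"
proof -
  interpret threshold_ma_process M e q d r \<mu>1 \<mu>2 \<phi> \<psi> y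
  proof (intro threshold_ma_process.intro iid_sequence.intro iid_sequence_axioms.intro
      threshold_ma_process_axioms.intro)
    show "prob_space M" "prob_space.indep_vars M (\<lambda>_. borel) e UNIV"
      by (fact P e_indep)+
  qed (use e_ident e_L2 d nondeg[of 0] y_meas y_eq in auto)
  have p: "0 \<le> sqrt (1 - p)" "sqrt (1 - p) < 1"
    using p_pos p_le_1 by auto
  obtain C \<rho> where C: "0 < C" "0 < \<rho>" "\<rho> < 1"
    and decay: "\<forall>k. \<bar>covariance M (y 0) (y (int k))\<bar> \<le> C * \<rho> ^ k"
    using geometric_rate_from_blocks[OF p block_bounds(2), of "4 * K"
        "\<lambda>k. \<bar>covariance M (y 0) (y (int k))\<bar>" "q + 1"] K_nonneg covariance_bound
    by auto
  have "integrable M (\<lambda>\<omega>. (y 0 \<omega>)\<^sup>2)"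
    using y_square_integrable by (simp add: square_integrable_def)
  moreover have "(\<lambda>k. covariance M (y 0) (y (int k)) / covariance M (y 0) (y 0)) \<in> O(\<lambda>k. \<rho> ^ k)"
    if "covariance M (y 0) (y 0) > 0"
    using decay that C(2) by (rule scaled_bigo_geometric)
  ultimately show ?thesis
    using C decay by blast
qed

end
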